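(* There is a constant $C$ such that for every $T\ge2$ there is an online forecasting algorithm which, against every (possibly adaptive) sequence of outcomes $b_1,\dots,b_T\in\{0,1\}$, guarantees $\mathrm{Cal}(\mathbf x_{1:T},\mathbf b_{1:T})\le C\,T^{1/3}\log T$.
   Context: Online calibration: in each round $t$ the forecaster, knowing $b_1,\dots,b_{t-1}$, outputs a finitely supported distribution $\mathbf x_t\in\Delta([0,1])$ over predictions; then the adversary, knowing $\mathbf x_1,\dots,\mathbf x_t$, chooses $b_t\in\{0,1\}$. Writing $\mathbf x_t[p]$ for the probability that $\mathbf x_t$ assigns to $p$, $W_p=\sum_t\mathbf x_t[p]$ and $B_p=\sum_t b_t\mathbf x_t[p]$, the $\ell_2$-calibration error is $$\mathrm{Cal}(\mathbf x_{1:T},\mathbf b_{1:T})=\sum_{p\in[0,1]:\,W_p>0}W_p\Big(p-\frac{B_p}{W_p}\Big)^2 .$$ *)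

theory Defs
  imports "HOL-Probability.Probability_Mass_Function"
begin

text \<open>A forecaster maps the history of outcomes b_1..b_(t-1) to a distribution
  over predictions. An (adaptive) adversary maps the forecasts x_1..x_t to the
  outcome b_t (True = 1, False = 0).\<close>

type_synonym forecaster = "bool list \<Rightarrow> real pmf"
type_synonym adversary = "real pmf list \<Rightarrow> bool"

definition valid_forecaster :: "forecaster \<Rightarrow> bool" where
  "valid_forecaster F \<longleftrightarrow>
     (\<forall>bs. finite (set_pmf (F bs)) \<and> set_pmf (F bs) \<subseteq> {0..1})"

fun run :: "forecaster \<Rightarrow> adversary \<Rightarrow> nat \<Rightarrow> real pmf list \<times> bool list" where
  "run F A 0 = ([], [])"
| "run F A (Suc n) =
     (let (xs, bs) = run F A n;
          xs' = xs @ [F bs]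
      in (xs', bs @ [A xs']))"

definition Wt :: "real pmf list \<Rightarrow> real \<Rightarrow> real" where
  "Wt xs p = (\<Sum>t<length xs. pmf (xs ! t) p)"

definition Bt :: "real pmf list \<Rightarrow> bool list \<Rightarrow> real \<Rightarrow> real" where
  "Bt xs bs p = (\<Sum>t<length xs. of_bool (bs ! t) * pmf (xs ! t) p)"

definition cal :: "real pmf list \<Rightarrow> bool list \<Rightarrow> real" where
  "cal xs bs = (\<Sum>p \<in> {p \<in> {0..1}. Wt xs p > 0}.
                  Wt xs p * (p - Bt xs bs p / Wt xs p)\<^sup>2)"

end

theory Submission
  imports Defs
begin

text \<open>The forecaster works on the grid i/m, m \<approx> T^(1/3), and keeps for every grid point i the
  total probability W_i it has put on i and the part B_i of it that fell on outcomes 1. Each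
  grid point runs follow-the-regularized-leader on the squared loss, whose prediction is the
  smoothed mean (B_i + 1/2)/(W_i + 1), with logarithmic regret. The forecaster randomizes between
  two neighbouring grid points k/m < mean_k and (k+1)/m \<ge> mean_(k+1), with weights making the
  expected gap zero; then in every round the squared loss of the forecast exceeds the squared
  loss of the corresponding smoothed means by at most 1/(4 m^2). The calibration error of grid
  point i is its loss minus the loss of its empirical mean, so summing gives
  Cal \<le> T/(4 m^2) + (m + 1)(1/4 + ln (1 + T)) = O(T^(1/3) log T).\<close>

lemma mixture_loss_le:
  fixes x h m m' b :: real
  assumes below: "x < m" and above: "m' \<le> x + h"
  defines "q \<equiv> (x + h - m') / ((x + h - m') - (x - m))"
  shows "q * (x - b)\<^sup>2 + (1 - q) * (x + h - b)\<^sup>2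
         \<le> q * (m - b)\<^sup>2 + (1 - q) * (m' - b)\<^sup>2 + h\<^sup>2 / 4"
proof -
  define d d' where "d = x - m" and "d' = x + h - m'"
  define s where "s = d' - d"
  define a where "a = d' * (- d) / s"
  have s: "s > 0" using below above by (simp add: s_def d_def d'_def)
  \<comment> \<open>q d + (1 - q) d' = 0, so the loss difference below does not depend on b\<close>
  have qd: "q * d = - a" and qd': "(1 - q) * d' = a"
    using s by (simp_all add: q_def a_def s_def d_def d'_def field_simps)
  have a: "0 \<le> a" "4 * a \<le> s"
  proof -
    show "0 \<le> a" using s below above by (simp add: a_def d_def d'_def)
    have "4 * (d' * (- d)) \<le> s * s"
      using zero_le_power2[of "d' + d"] by (simp add: s_def power2_eq_square algebra_simps)
    thus "4 * a \<le> s" using s by (simp add: a_def field_simps)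
  qed
  have "q * (x - b)\<^sup>2 + (1 - q) * (x + h - b)\<^sup>2 - (q * (m - b)\<^sup>2 + (1 - q) * (m' - b)\<^sup>2)
      = (q * d) * (2 * x - d - 2 * b) + ((1 - q) * d') * (2 * x + 2 * h - d' - 2 * b)"
    by (simp add: d_def d'_def power2_eq_square algebra_simps)
  also have "\<dots> = a * (2 * h - s)"
    unfolding qd qd' by (simp add: s_def algebra_simps)
  also have "\<dots> \<le> a * (2 * h - 4 * a)"
    using a by (intro mult_left_mono) auto
  also have "\<dots> \<le> h\<^sup>2 / 4"
    using zero_le_power2[of "h - 4 * a"] by (simp add: power2_eq_square algebra_simps)
  finally show ?thesis by simp
qed

text \<open>For outcomes b_t with weights w_t, total weight W = \<Sum> w_t and B = \<Sum> w_t b_t, the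
  regularized loss \<Sum> w_t (y - b_t)^2 + (y - 1/2)^2 equals (W + 1) y^2 - 2 (B + 1/2) y + B + 1/4;
  ftrl_value W B is its minimum, attained at the smoothed mean (B + 1/2)/(W + 1).\<close>

definition ftrl_value :: "real \<Rightarrow> real \<Rightarrow> real" where
  "ftrl_value W B = B + 1/4 - (B + 1/2)\<^sup>2 / (W + 1)"

lemma ftrl_value_le:
  fixes W B y :: real
  assumes "W + 1 > 0"
  shows "ftrl_value W B \<le> (W + 1) * y\<^sup>2 - 2 * (B + 1/2) * y + B + 1/4"
proof -
  have "(W + 1) * y\<^sup>2 - 2 * (B + 1/2) * y + B + 1/4 - ftrl_value W B
      = ((W + 1) * y - (B + 1/2))\<^sup>2 / (W + 1)"
    using assms by (simp add: ftrl_value_def field_simps power2_eq_square)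
  also have "\<dots> \<ge> 0" using assms by simp
  finally show ?thesis by simp
qed

lemma ftrl_value_le_empirical:
  fixes W B :: real
  assumes "W > 0" "0 \<le> B" "B \<le> W"
  shows "ftrl_value W B \<le> 1/4 + B - B\<^sup>2 / W"
proof -
  define r where "r = B / W"
  have r: "0 \<le> r" "r \<le> 1" using assms by (auto simp: r_def field_simps)
  have "ftrl_value W B \<le> (W + 1) * r\<^sup>2 - 2 * (B + 1/2) * r + B + 1/4"
    using assms by (intro ftrl_value_le) simp
  also have "\<dots> = B - B\<^sup>2 / W + (r * r - r + 1/4)"
    using assms by (simp add: r_def field_simps power2_eq_square)
  also have "\<dots> \<le> B - B\<^sup>2 / W + 1/4"
    using r mult_left_le[of r r] by simp
  finally show ?thesis by simp
qed

lemma ftrl_value_increment: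
  fixes W B w :: real and b :: bool
  assumes "W \<ge> 0" "w \<ge> 0"
  shows "ftrl_value (W + w) (B + of_bool b * w) - ftrl_value W B
       = w * (W + 1) / (W + 1 + w) * ((B + 1/2) / (W + 1) - of_bool b)\<^sup>2"
proof -
  define A M c where "A = W + 1" and "M = B + 1/2" and "c = (of_bool b :: real)"
  have A: "A \<noteq> 0" "A + w \<noteq> 0" using assms by (auto simp: A_def)
  have "ftrl_value (W + w) (B + c * w) - ftrl_value W B
      = c * w - (M + c * w)\<^sup>2 / (A + w) + M\<^sup>2 / A"
    by (simp add: ftrl_value_def A_def M_def add_ac)
  also have "\<dots> = (c * w * A * (A + w) - A * (M + c * w)\<^sup>2 + M\<^sup>2 * (A + w)) / (A * (A + w))"
    using A by (simp add: field_simps)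
  also have "c * w * A * (A + w) - A * (M + c * w)\<^sup>2 + M\<^sup>2 * (A + w) = w * (M - c * A)\<^sup>2"
    by (cases b) (simp_all add: c_def power2_eq_square algebra_simps)
  also have "w * (M - c * A)\<^sup>2 / (A * (A + w)) = w * A / (A + w) * ((M - c * A) / A)\<^sup>2"
    using A by (simp add: power_divide power2_eq_square)
  also have "(M - c * A) / A = M / A - c"
    using A by (simp add: field_simps)
  finally show ?thesis by (simp add: A_def M_def c_def add_ac)
qed

lemma ftrl_regret_step:
  fixes W B w :: real and b :: bool
  assumes W: "W \<ge> 0" and B: "0 \<le> B" "B \<le> W" and w: "0 \<le> w" "w \<le> 1"
  shows "w * ((B + 1/2) / (W + 1) - of_bool b)\<^sup>2
     \<le> ftrl_value (W + w) (B + of_bool b * w) - ftrl_value W B + ln (1 + (W + w)) - ln (1 + W)"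
proof -
  define y where "y = (B + 1/2) / (W + 1)"
  define A where "A = W + 1"
  have A: "A > 0" "A + w > 0" using W w by (auto simp: A_def)
  have "0 < y" "y < 1" using W B by (auto simp: y_def field_simps)
  hence "\<bar>y - of_bool b\<bar> \<le> 1" by (cases b) auto
  hence loss: "(y - of_bool b)\<^sup>2 \<le> 1" by (simp only: abs_square_le_1)
  have "w * (y - of_bool b)\<^sup>2 - w * A / (A + w) * (y - of_bool b)\<^sup>2
      = w * w / (A + w) * (y - of_bool b)\<^sup>2"
    using A by (simp add: field_simps)
  also have "\<dots> \<le> w * w / (A + w)"
    using loss A w by (intro mult_left_le) auto
  also have "\<dots> \<le> w / (A + w)"
    using A w by (intro divide_right_mono) (auto intro: mult_left_le)
  also have "\<dots> \<le> ln (A + w) - ln A"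
  proof -
    have "ln (A / (A + w)) \<le> A / (A + w) - 1" using A by (intro ln_le_minus_one) auto
    also have "A / (A + w) - 1 = - (w / (A + w))" using A by (simp add: field_simps)
    finally show ?thesis using A by (simp add: ln_div)
  qed
  finally show ?thesis
    using ftrl_value_increment[OF W w(1), of B b] by (simp add: y_def A_def add_ac)
qed

text \<open>The statistics W_i (first component) and B_i (second component) of all grid points.\<close>

type_synonym grid_stats = "(nat \<Rightarrow> real) \<times> (nat \<Rightarrow> real)"

definition grid :: "nat \<Rightarrow> nat \<Rightarrow> real" where
  "grid m i = real i / real m"

definition smoothed_mean :: "grid_stats \<Rightarrow> nat \<Rightarrow> real" where
  "smoothed_mean s i = (snd s i + 1/2) / (fst s i + 1)"

definition gap :: "nat \<Rightarrow> grid_stats \<Rightarrow> nat \<Rightarrow> real" where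
  "gap m s i = grid m i - smoothed_mean s i"

definition crossing :: "nat \<Rightarrow> grid_stats \<Rightarrow> nat" where
  "crossing m s = (LEAST k. 0 \<le> gap m s (Suc k))"

definition mix_prob :: "nat \<Rightarrow> grid_stats \<Rightarrow> real" where
  "mix_prob m s = gap m s (Suc (crossing m s)) / (gap m s (Suc (crossing m s)) - gap m s (crossing m s))"

definition grid_weight :: "nat \<Rightarrow> grid_stats \<Rightarrow> nat \<Rightarrow> real" where
  "grid_weight m s i =
     (if i = crossing m s then mix_prob m s
      else if i = Suc (crossing m s) then 1 - mix_prob m s else 0)"

definition update :: "nat \<Rightarrow> grid_stats \<Rightarrow> bool \<Rightarrow> grid_stats" where
  "update m s b = (\<lambda>i. fst s i + grid_weight m s i, \<lambda>i. snd s i + of_bool b * grid_weight m s i)"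

definition history_stats :: "nat \<Rightarrow> bool list \<Rightarrow> grid_stats" where
  "history_stats m bs = foldl (update m) (\<lambda>_. 0, \<lambda>_. 0) bs"

definition grid_forecaster :: "nat \<Rightarrow> forecaster" where
  "grid_forecaster m bs =
     (let s = history_stats m bs; k = crossing m s
      in map_pmf (\<lambda>c. if c then grid m k else grid m (Suc k)) (bernoulli_pmf (mix_prob m s)))"

definition consistent_stats :: "grid_stats \<Rightarrow> bool" where
  "consistent_stats s \<longleftrightarrow> (\<forall>i. 0 \<le> snd s i \<and> snd s i \<le> fst s i)"

lemma grid_eq_iff: "m \<ge> 1 \<Longrightarrow> grid m i = grid m j \<longleftrightarrow> i = j"
  by (simp add: grid_def)

lemma grid_Suc: "grid m (Suc k) = grid m k + 1 / real m"
  by (simp add: grid_def add_divide_distrib)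

lemma grid_in_unit_interval: "i \<le> m \<Longrightarrow> grid m i \<in> {0..1}"
  by (cases "m = 0") (auto simp: grid_def divide_le_eq_1)

lemma smoothed_mean_bounds:
  assumes "consistent_stats s"
  shows "0 < smoothed_mean s i" "smoothed_mean s i < 1"
  using spec[OF assms[unfolded consistent_stats_def], of i]
  by (auto simp: smoothed_mean_def field_simps)

lemma crossing_spec:
  assumes m: "m \<ge> 1" and s: "consistent_stats s"
  shows "crossing m s < m" "gap m s (crossing m s) < 0" "0 \<le> gap m s (Suc (crossing m s))"
proof -
  have ex: "0 \<le> gap m s (Suc (m - 1))"
    using m smoothed_mean_bounds[OF s, of m] by (simp add: gap_def grid_def)
  show "0 \<le> gap m s (Suc (crossing m s))"
    unfolding crossing_def by (rule LeastI[of "\<lambda>k. 0 \<le> gap m s (Suc k)", OF ex])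
  have "crossing m s \<le> m - 1"
    unfolding crossing_def by (rule Least_le[of "\<lambda>k. 0 \<le> gap m s (Suc k)", OF ex])
  thus "crossing m s < m" using m by simp
  show "gap m s (crossing m s) < 0"
  proof (cases "crossing m s")
    case 0
    thus ?thesis using smoothed_mean_bounds[OF s, of 0] by (simp add: gap_def grid_def)
  next
    case (Suc j)
    hence "\<not> 0 \<le> gap m s (Suc j)"
      unfolding crossing_def by (intro not_less_Least) (simp add: crossing_def)
    thus ?thesis using Suc by simp
  qed
qed

lemma mix_prob_bounds:
  assumes "m \<ge> 1" "consistent_stats s"
  shows "0 \<le> mix_prob m s" "mix_prob m s \<le> 1"
  using crossing_spec[OF assms] unfolding mix_prob_def by (auto simp: field_simps)

lemma grid_weight_bounds:
  assumes "m \<ge> 1" "consistent_stats s"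
  shows "0 \<le> grid_weight m s i" "grid_weight m s i \<le> 1"
  using mix_prob_bounds[OF assms] unfolding grid_weight_def by auto

lemma sum_grid_weight:
  assumes "m \<ge> 1" "consistent_stats s"
  shows "(\<Sum>i\<le>m. grid_weight m s i * f i)
       = mix_prob m s * f (crossing m s) + (1 - mix_prob m s) * f (Suc (crossing m s))"
proof -
  have "(\<Sum>i\<le>m. grid_weight m s i * f i)
      = (\<Sum>i\<le>m. (if i = crossing m s then mix_prob m s * f (crossing m s) else 0)
               + (if i = Suc (crossing m s) then (1 - mix_prob m s) * f (Suc (crossing m s)) else 0))"
    by (intro sum.cong) (auto simp: grid_weight_def)
  also have "\<dots> = mix_prob m s * f (crossing m s) + (1 - mix_prob m s) * f (Suc (crossing m s))"
    using crossing_spec(1)[OF assms] by (simp add: sum.distrib)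
  finally show ?thesis .
qed

lemma consistent_update:
  assumes "m \<ge> 1" "consistent_stats s"
  shows "consistent_stats (update m s b)"
proof -
  have "0 \<le> snd s i + of_bool b * grid_weight m s i \<and>
        snd s i + of_bool b * grid_weight m s i \<le> fst s i + grid_weight m s i" for i
  proof -
    have "0 \<le> snd s i" "snd s i \<le> fst s i" using assms(2) by (auto simp: consistent_stats_def)
    thus ?thesis using grid_weight_bounds[OF assms, of i] by (cases b) auto
  qed
  thus ?thesis by (simp add: consistent_stats_def update_def)
qed

lemma history_stats_snoc: "history_stats m (bs @ [b]) = update m (history_stats m bs) b"
  by (simp add: history_stats_def)

lemma consistent_history_stats: "m \<ge> 1 \<Longrightarrow> consistent_stats (history_stats m bs)"
proof (induction bs rule: rev_induct)
  case Nil thus ?case by (simp add: history_stats_def consistent_stats_def)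
next
  case (snoc b bs) thus ?case by (simp add: history_stats_snoc consistent_update)
qed

lemma history_stats_eq_sums:
  "fst (history_stats m bs) i = (\<Sum>t<length bs. grid_weight m (history_stats m (take t bs)) i)"
  "snd (history_stats m bs) i
     = (\<Sum>t<length bs. of_bool (bs ! t) * grid_weight m (history_stats m (take t bs)) i)"
proof (induction bs rule: rev_induct)
  case (snoc b bs)
  have "take t (bs @ [b]) = take t bs" "(bs @ [b]) ! t = bs ! t" if "t < length bs" for t
    using that by (simp_all add: nth_append)
  thus "fst (history_stats m (bs @ [b])) i
          = (\<Sum>t<length (bs @ [b]). grid_weight m (history_stats m (take t (bs @ [b]))) i)"
    and "snd (history_stats m (bs @ [b])) i
          = (\<Sum>t<length (bs @ [b]).
               of_bool ((bs @ [b]) ! t) * grid_weight m (history_stats m (take t (bs @ [b]))) i)"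
    using snoc by (simp_all add: history_stats_snoc update_def)
qed (simp_all add: history_stats_def)

lemma history_weight_le_length:
  assumes "m \<ge> 1"
  shows "fst (history_stats m bs) i \<le> real (length bs)"
proof -
  have "(\<Sum>t<length bs. grid_weight m (history_stats m (take t bs)) i) \<le> (\<Sum>t<length bs. 1)"
    using grid_weight_bounds(2)[OF assms consistent_history_stats[OF assms]] by (intro sum_mono)
  thus ?thesis by (simp add: history_stats_eq_sums)
qed

lemma set_pmf_grid_forecaster:
  "set_pmf (grid_forecaster m bs)
     \<subseteq> {grid m (crossing m (history_stats m bs)), grid m (Suc (crossing m (history_stats m bs)))}"
  unfolding grid_forecaster_def by (auto simp: Let_def)

lemma set_pmf_grid_forecaster_subset:
  assumes "m \<ge> 1"
  shows "set_pmf (grid_forecaster m bs) \<subseteq> grid m ` {..m}"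
proof -
  have "crossing m (history_stats m bs) < m"
    by (rule crossing_spec(1)[OF assms consistent_history_stats[OF assms]])
  thus ?thesis using set_pmf_grid_forecaster[of m bs] by fastforce
qed

lemma valid_grid_forecaster: "m \<ge> 1 \<Longrightarrow> valid_forecaster (grid_forecaster m)"
  unfolding valid_forecaster_def
proof (intro allI conjI)
  fix bs assume m: "m \<ge> 1"
  show "finite (set_pmf (grid_forecaster m bs))"
    using set_pmf_grid_forecaster_subset[OF m] by (rule finite_subset) simp
  show "set_pmf (grid_forecaster m bs) \<subseteq> {0..1}"
    using set_pmf_grid_forecaster_subset[OF m] grid_in_unit_interval by blast
qed

lemma pmf_grid_forecaster:
  assumes m: "m \<ge> 1"
  shows "pmf (grid_forecaster m bs) (grid m i) = grid_weight m (history_stats m bs) i"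
proof -
  define s where "s = history_stats m bs"
  define k where "k = crossing m s"
  define f where "f = (\<lambda>c. if c then grid m k else grid m (Suc k))"
  have q: "0 \<le> mix_prob m s" "mix_prob m s \<le> 1"
    using mix_prob_bounds[OF m consistent_history_stats[OF m]] by (auto simp: s_def)
  have F: "grid_forecaster m bs = map_pmf f (bernoulli_pmf (mix_prob m s))"
    unfolding grid_forecaster_def Let_def f_def k_def s_def by (rule refl)
  have "inj f" unfolding f_def inj_def using grid_eq_iff[OF m] by auto
  hence pmf_f: "pmf (grid_forecaster m bs) (f c) = pmf (bernoulli_pmf (mix_prob m s)) c" for c
    unfolding F by (rule pmf_map_inj')
  consider "i = k" | "i = Suc k" | "i \<noteq> k" "i \<noteq> Suc k" by blast
  thus ?thesis
  proof cases
    case 1 thus ?thesis using pmf_f[of True] q by (simp add: f_def grid_weight_def k_def s_def)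
  next
    case 2 thus ?thesis using pmf_f[of False] q by (simp add: f_def grid_weight_def k_def s_def)
  next
    case 3
    hence "grid m i \<notin> set_pmf (grid_forecaster m bs)"
      using set_pmf_grid_forecaster[of m bs] grid_eq_iff[OF m] by (auto simp: k_def s_def)
    thus ?thesis using 3 by (simp add: pmf_eq_0_set_pmf grid_weight_def k_def s_def)
  qed
qed

text \<open>W g^2 - 2 g B + B is the weighted squared loss of predicting g on outcomes with weight W
  and weighted number of ones B.\<close>

definition point_regret :: "real \<Rightarrow> real \<Rightarrow> real \<Rightarrow> real" where
  "point_regret g W B = W * g\<^sup>2 - 2 * g * B + B - ftrl_value W B - ln (1 + W)"

definition calibration_potential :: "nat \<Rightarrow> grid_stats \<Rightarrow> real" where
  "calibration_potential m s = (\<Sum>i\<le>m. point_regret (grid m i) (fst s i) (snd s i))"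

lemma point_regret_update:
  fixes g W B w :: real and b :: bool
  assumes "0 \<le> B" "B \<le> W" "0 \<le> w" "w \<le> 1"
  shows "point_regret g (W + w) (B + of_bool b * w)
       \<le> point_regret g W B + w * ((g - of_bool b)\<^sup>2 - ((B + 1/2) / (W + 1) - of_bool b)\<^sup>2)"
proof -
  have "w * g\<^sup>2 - 2 * g * (of_bool b * w) + of_bool b * w = w * (g - of_bool b)\<^sup>2"
    by (cases b) (simp_all add: power2_eq_square algebra_simps)
  thus ?thesis
    using ftrl_regret_step[of W B w b] assms
    by (simp add: point_regret_def algebra_simps)
qed

lemma calibration_potential_update:
  assumes m: "m \<ge> 1" and s: "consistent_stats s"
  shows "calibration_potential m (update m s b) \<le> calibration_potential m s + 1 / (4 * (real m)\<^sup>2)"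
proof -
  define D where "D i = (grid m i - of_bool b)\<^sup>2 - (smoothed_mean s i - of_bool b)\<^sup>2" for i
  define k where "k = crossing m s"
  have "point_regret (grid m i) (fst (update m s b) i) (snd (update m s b) i)
      \<le> point_regret (grid m i) (fst s i) (snd s i) + grid_weight m s i * D i" for i
  proof -
    have "0 \<le> snd s i" "snd s i \<le> fst s i" using s by (auto simp: consistent_stats_def)
    thus ?thesis
      using point_regret_update grid_weight_bounds[OF m s, of i]
      by (simp add: update_def D_def smoothed_mean_def)
  qed
  hence "calibration_potential m (update m s b)
      \<le> calibration_potential m s + (\<Sum>i\<le>m. grid_weight m s i * D i)"
    unfolding calibration_potential_def sum.distrib[symmetric] by (intro sum_mono)
  also have "(\<Sum>i\<le>m. grid_weight m s i * D i) = mix_prob m s * D k + (1 - mix_prob m s) * D (Suc k)"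
    unfolding k_def by (rule sum_grid_weight[OF m s])
  also have "\<dots> \<le> (1 / real m)\<^sup>2 / 4"
  proof -
    define x h where "x = grid m k" and "h = 1 / real m"
    define \<mu> \<mu>' where "\<mu> = smoothed_mean s k" and "\<mu>' = smoothed_mean s (Suc k)"
    have "x < \<mu>" "\<mu>' \<le> x + h"
      using crossing_spec(2,3)[OF m s]
      by (simp_all add: x_def h_def \<mu>_def \<mu>'_def k_def gap_def grid_Suc)
    moreover have "mix_prob m s = (x + h - \<mu>') / ((x + h - \<mu>') - (x - \<mu>))"
      by (simp add: mix_prob_def gap_def grid_Suc x_def h_def \<mu>_def \<mu>'_def k_def)
    ultimately have "mix_prob m s * (x - of_bool b)\<^sup>2 + (1 - mix_prob m s) * (x + h - of_bool b)\<^sup>2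
      \<le> mix_prob m s * (\<mu> - of_bool b)\<^sup>2 + (1 - mix_prob m s) * (\<mu>' - of_bool b)\<^sup>2 + h\<^sup>2 / 4"
      by (simp only: mixture_loss_le)
    thus ?thesis
      by (simp add: D_def grid_Suc x_def h_def \<mu>_def \<mu>'_def algebra_simps)
  qed
  also have "\<dots> = 1 / (4 * (real m)\<^sup>2)" by (simp add: power_divide)
  finally show ?thesis by simp
qed

lemma calibration_potential_history:
  assumes "m \<ge> 1"
  shows "calibration_potential m (history_stats m bs) \<le> real (length bs) / (4 * (real m)\<^sup>2)"
proof (induction bs rule: rev_induct)
  case Nil thus ?case
    by (simp add: history_stats_def calibration_potential_def point_regret_def ftrl_value_def
        power2_eq_square)
next
  case (snoc b bs)
  have "calibration_potential m (history_stats m (bs @ [b]))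
      \<le> calibration_potential m (history_stats m bs) + 1 / (4 * (real m)\<^sup>2)"
    unfolding history_stats_snoc
    by (rule calibration_potential_update[OF assms consistent_history_stats[OF assms]])
  also have "\<dots> \<le> real (length (bs @ [b])) / (4 * (real m)\<^sup>2)"
    using snoc by (simp add: add_divide_distrib)
  finally show ?case .
qed

lemma point_calibration_le:
  fixes g W B n :: real
  assumes "0 \<le> B" "B \<le> W" "W \<le> n"
  shows "(if 0 < W then W * (g - B / W)\<^sup>2 else 0) \<le> point_regret g W B + (1/4 + ln (1 + n))"
proof (cases "0 < W")
  case True
  have "W * (g - B / W)\<^sup>2 = W * g\<^sup>2 - 2 * g * B + B\<^sup>2 / W"
    using True by (simp add: field_simps power2_eq_square)
  moreover have "ftrl_value W B \<le> 1/4 + B - B\<^sup>2 / W"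
    using ftrl_value_le_empirical True assms by simp
  moreover have "ln (1 + W) \<le> ln (1 + n)"
    using assms by simp
  ultimately show ?thesis using True by (simp add: point_regret_def)
next
  case False
  hence "W = 0" "B = 0" using assms by linarith+
  moreover have "0 \<le> ln (1 + n)" using assms by simp
  ultimately show ?thesis by (simp add: point_regret_def ftrl_value_def power2_eq_square)
qed

lemma cal_eq_sum_over_support:
  assumes "finite P" "P \<subseteq> {0..1}" and supp: "\<And>t. t < length xs \<Longrightarrow> set_pmf (xs ! t) \<subseteq> P"
  shows "cal xs bs = (\<Sum>p\<in>P. if 0 < Wt xs p then Wt xs p * (p - Bt xs bs p / Wt xs p)\<^sup>2 else 0)"
proof -
  have "Wt xs p = 0" if "p \<notin> P" for p
  proof -
    have "pmf (xs ! t) p = 0" if "t < length xs" for t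
      using supp[OF that] \<open>p \<notin> P\<close> by (auto simp: pmf_eq_0_set_pmf)
    thus ?thesis by (simp add: Wt_def)
  qed
  hence "{p \<in> {0..1}. 0 < Wt xs p} = {p \<in> P. 0 < Wt xs p}"
    using assms(2) by force
  thus ?thesis
    unfolding cal_def using assms(1) by (simp add: sum.inter_filter)
qed

lemma run_unfold:
  "length (fst (run F A n)) = n" "length (snd (run F A n)) = n"
  "t < n \<Longrightarrow> fst (run F A n) ! t = F (take t (snd (run F A n)))"
proof (induction n arbitrary: t)
  case (Suc n)
  obtain xs bs where r: "run F A n = (xs, bs)" by (cases "run F A n")
  { case 1 show ?case using Suc r by (simp add: Let_def) }
  { case 2 show ?case using Suc r by (simp add: Let_def) }
  { case 3 thus ?case using Suc.IH r by (auto simp: Let_def nth_append less_Suc_eq) }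
qed simp_all

lemma cal_grid_forecaster_le:
  fixes A :: adversary and T :: nat
  assumes m: "m \<ge> 1"
  defines "xs \<equiv> fst (run (grid_forecaster m) A T)" and "bs \<equiv> snd (run (grid_forecaster m) A T)"
  shows "cal xs bs \<le> real T / (4 * (real m)\<^sup>2) + (real m + 1) * (1/4 + ln (1 + real T))"
proof -
  define s where "s = history_stats m bs"
  have len: "length xs = T" "length bs = T"
    and xs: "\<And>t. t < T \<Longrightarrow> xs ! t = grid_forecaster m (take t bs)"
    using run_unfold unfolding xs_def bs_def by blast+
  have W: "Wt xs (grid m i) = fst s i" and B: "Bt xs bs (grid m i) = snd s i" for i
    unfolding Wt_def Bt_def s_def history_stats_eq_sums len
    by (simp_all add: xs pmf_grid_forecaster[OF m])
  have cons: "0 \<le> snd s i" "snd s i \<le> fst s i" "fst s i \<le> real T" for i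
    using consistent_history_stats[OF m, of bs] history_weight_le_length[OF m, of bs i] len
    by (auto simp: consistent_stats_def s_def)
  have "cal xs bs = (\<Sum>p\<in>grid m ` {..m}.
                       if 0 < Wt xs p then Wt xs p * (p - Bt xs bs p / Wt xs p)\<^sup>2 else 0)"
    using set_pmf_grid_forecaster_subset[OF m] grid_in_unit_interval len xs
    by (intro cal_eq_sum_over_support) auto
  also have "\<dots> = (\<Sum>i\<le>m. if 0 < fst s i then fst s i * (grid m i - snd s i / fst s i)\<^sup>2 else 0)"
  proof -
    have "inj_on (grid m) {..m}" using grid_eq_iff[OF m] by (auto simp: inj_on_def)
    thus ?thesis by (simp add: sum.reindex W B cong: if_cong)
  qed
  also have "\<dots> \<le> (\<Sum>i\<le>m. point_regret (grid m i) (fst s i) (snd s i) + (1/4 + ln (1 + real T)))"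
    using cons by (intro sum_mono point_calibration_le)
  also have "\<dots> = calibration_potential m s + (real m + 1) * (1/4 + ln (1 + real T))"
    by (simp add: sum.distrib calibration_potential_def)
  also have "\<dots> \<le> real T / (4 * (real m)\<^sup>2) + (real m + 1) * (1/4 + ln (1 + real T))"
    using calibration_potential_history[OF m, of bs] len by (simp add: s_def)
  finally show ?thesis .
qed

lemma cube_root_grid_bound:
  fixes T :: nat
  assumes T: "T \<ge> 2"
  defines "m \<equiv> nat \<lceil>real T powr (1/3)\<rceil>"
  shows "m \<ge> 1"
    and "real T / (4 * (real m)\<^sup>2) + (real m + 1) * (1/4 + ln (1 + real T))
           \<le> 10 * real T powr (1/3) * ln (real T)"
proof -
  define c where "c = real T powr (1/3)"
  have T2: "real T \<ge> 2" using T by simp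
  have c1: "c \<ge> 1" unfolding c_def using T2 by (intro ge_one_powr_ge_zero) auto
  have mc: "c \<le> real m" "real m \<le> c + 1"
    unfolding m_def c_def[symmetric] using c1 by (simp_all add: of_int_ceiling_le_add_one)
  show "m \<ge> 1" using mc c1 by linarith
  have c3: "c * c * c = real T"
    using T2 by (simp add: c_def powr_add[symmetric])
  have lnT: "ln (real T) \<ge> 1/2"
  proof -
    have "ln (1 / real T) \<le> 1 / real T - 1" using T2 by (intro ln_le_minus_one) auto
    moreover have "ln (1 / real T) = - ln (real T)" using T2 by (simp add: ln_div)
    moreover have "1 / real T \<le> 1/2" using T2 by simp
    ultimately show ?thesis by linarith
  qed
  have "1 + real T \<le> real T * real T"
    using T2 mult_right_mono[of 2 "real T" "real T"] by linarith
  hence "ln (1 + real T) \<le> ln (real T * real T)"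
    using T2 by simp
  also have "\<dots> = 2 * ln (real T)" using T2 by (simp add: ln_mult)
  finally have "1/4 + ln (1 + real T) \<le> 3 * ln (real T)" using lnT by linarith
  hence "(real m + 1) * (1/4 + ln (1 + real T)) \<le> (3 * c) * (3 * ln (real T))"
    using mc c1 T2 by (intro mult_mono) auto
  moreover have "real T / (4 * (real m)\<^sup>2) \<le> c * ln (real T)"
  proof -
    have "real T / (4 * (real m)\<^sup>2) \<le> real T / (4 * c\<^sup>2)"
      using mc c1 by (intro divide_left_mono mult_left_mono power_mono) auto
    also have "\<dots> = c * (1/4)" using c1 by (simp add: c3[symmetric] power2_eq_square field_simps)
    also have "\<dots> \<le> c * ln (real T)" using c1 lnT by (intro mult_left_mono) auto
    finally show ?thesis .
  qed
  ultimately show "real T / (4 * (real m)\<^sup>2) + (real m + 1) * (1/4 + ln (1 + real T))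
           \<le> 10 * real T powr (1/3) * ln (real T)"
    by (simp add: c_def algebra_simps)
qed

theorem theorem4:
  "\<exists>C::real. \<forall>T::nat. T \<ge> 2 \<longrightarrow>
     (\<exists>F. valid_forecaster F \<and>
        (\<forall>A::adversary. cal (fst (run F A T)) (snd (run F A T))
                          \<le> C * real T powr (1/3) * ln (real T)))"
proof (rule exI[of _ 10], intro allI impI)
  fix T :: nat
  assume T: "T \<ge> 2"
  define m where "m = nat \<lceil>real T powr (1/3)\<rceil>"
  have m: "m \<ge> 1" using cube_root_grid_bound(1)[OF T] by (simp add: m_def)
  have "cal (fst (run (grid_forecaster m) A T)) (snd (run (grid_forecaster m) A T))
          \<le> 10 * real T powr (1/3) * ln (real T)" for A
    using cal_grid_forecaster_le[OF m, of A T] cube_root_grid_bound(2)[OF T]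
    by (simp add: m_def)
  thus "\<exists>F. valid_forecaster F \<and>
          (\<forall>A::adversary. cal (fst (run F A T)) (snd (run F A T))
                            \<le> 10 * real T powr (1/3) * ln (real T))"
    using valid_grid_forecaster[OF m] by blast
qed

end
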